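(* Let $w=w_1\cdots w_N$ be a 132-avoiding sorting network of $\mathfrak S_n$ and let $1\le i<j\le n$. Then the (unique) step $k$ at which the values $i$ and $j$ are interchanged, i.e. at which $\sigma_k$ is obtained from $\sigma_{k-1}$ by swapping the adjacent entries $i$ and $j$, satisfies $w_k=j-i$.
   Context: $N=\binom n2$, $s_i=(i,i+1)$, $w_0$ the reverse permutation $w_0(i)=n+1-i$. A sorting network is a word $w_1\cdots w_N$ over $[n-1]$ with $s_{w_1}\cdots s_{w_N}=w_0$; intermediate permutations $\sigma_0=\mathrm{id}$, $\sigma_k=s_{w_1}\cdots s_{w_k}$, where in one-line notation $\sigma_k$ is obtained from $\sigma_{k-1}$ by swapping the entries in positions $w_k$ and $w_k+1$. It is 132-avoiding if every $\sigma_k$ avoids the pattern 132. In a sorting network each pair of values is swapped exactly once. *)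

theory Defs
  imports Main
begin

definition adj_swap :: "nat \<Rightarrow> nat \<Rightarrow> nat" where
  "adj_swap p x = (if x = p then p + 1 else if x = p + 1 then p else x)"

text \<open>Intermediate permutations in one-line notation: sigma w k maps a position to
  the value in that position. The word w = w_1 ... w_N is the list w, with w_k = w ! (k-1).
  sigma_k = sigma_(k-1) s_(w_k), i.e. swap the entries in positions w_k and w_k + 1.\<close>
fun sigma :: "nat list \<Rightarrow> nat \<Rightarrow> (nat \<Rightarrow> nat)" where
  "sigma w 0 = id"
| "sigma w (Suc k) = sigma w k \<circ> adj_swap (w ! k)"

definition sorting_network :: "nat \<Rightarrow> nat list \<Rightarrow> bool" where
  "sorting_network n w \<longleftrightarrow>
     length w = n choose 2 \<and> (\<forall>a \<in> set w. 1 \<le> a \<and> a \<le> n - 1) \<and>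
     (\<forall>x \<in> {1..n}. sigma w (length w) x = n + 1 - x)"

definition avoids_132 :: "nat \<Rightarrow> (nat \<Rightarrow> nat) \<Rightarrow> bool" where
  "avoids_132 n s \<longleftrightarrow>
     \<not> (\<exists>a b c. 1 \<le> a \<and> a < b \<and> b < c \<and> c \<le> n \<and> s a < s c \<and> s c < s b)"

definition avoiding_132_network :: "nat \<Rightarrow> nat list \<Rightarrow> bool" where
  "avoiding_132_network n w \<longleftrightarrow>
     sorting_network n w \<and> (\<forall>k \<le> length w. avoids_132 n (sigma w k))"

end

theory Submission
  imports Defs
begin

text \<open>Counting inversions shows that a sorting network is a reduced word, so every step swaps
  an ascent \<open>i < j\<close> in positions \<open>q, q + 1\<close>. Avoiding 132 one step later forces every
  value left of \<open>q\<close> to exceed \<open>i\<close>; avoiding 132 at the step itself forces every value strictly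
  between \<open>i\<close> and \<open>j\<close> to lie left of \<open>q\<close>. Finally, no value \<open>x > j\<close> can lie left of \<open>q\<close>:
  at the earlier step swapping \<open>j\<close> and \<open>x\<close>, all values left of \<open>j\<close> exceed \<open>j\<close>, so \<open>i\<close> was
  already right of \<open>j\<close>, and an inverted pair never becomes uninverted again. Hence the
  \<open>q - 1\<close> positions left of \<open>q\<close> carry exactly the \<open>j - i - 1\<close> values between \<open>i\<close> and \<open>j\<close>.\<close>

lemma adj_swap_adj_swap [simp]: "adj_swap p (adj_swap p x) = x"
  by (simp add: adj_swap_def)

lemma adj_swap_less_adj_swap: "a < b \<Longrightarrow> (a, b) \<noteq> (p, p + 1) \<Longrightarrow> adj_swap p a < adj_swap p b"
  by (auto simp: adj_swap_def)

lemma adj_swap_in_interval: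
  "1 \<le> p \<Longrightarrow> p < n \<Longrightarrow> x \<in> {1..n} \<Longrightarrow> adj_swap p x \<in> {1..n}"
  by (auto simp: adj_swap_def)

lemma bij_betw_adj_swap: "1 \<le> p \<Longrightarrow> p < n \<Longrightarrow> bij_betw (adj_swap p) {1..n} {1..n}"
  by (rule bij_betw_byWitness[where f' = "adj_swap p"]) (auto simp: adj_swap_def)

lemma bij_betw_sigma:
  assumes "set w \<subseteq> {1..<n}" and "m \<le> length w"
  shows "bij_betw (sigma w m) {1..n} {1..n}"
  using assms(2)
proof (induction m)
  case 0
  then show ?case by (simp add: bij_betw_def)
next
  case (Suc m)
  have "w ! m \<in> {1..<n}"
    using assms(1) nth_mem[of m w] Suc.prems by (simp add: subset_iff)
  then have "bij_betw (adj_swap (w ! m)) {1..n} {1..n}"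
    by (intro bij_betw_adj_swap) auto
  moreover have "bij_betw (sigma w m) {1..n} {1..n}"
    using Suc by simp
  ultimately have "bij_betw (sigma w m \<circ> adj_swap (w ! m)) {1..n} {1..n}"
    by (rule bij_betw_trans)
  then show ?case
    by (simp only: sigma.simps)
qed

lemma card_increasing_pairs: "card {(a, b). 1 \<le> a \<and> a < b \<and> b \<le> (n::nat)} = n choose 2"
proof (induction n)
  case 0
  have "{(a, b). 1 \<le> a \<and> a < b \<and> b \<le> (0::nat)} = {}"
    by auto
  then show ?case
    by (simp only: card.empty) simp
next
  case (Suc n)
  have split: "{(a, b). 1 \<le> a \<and> a < b \<and> b \<le> Suc n} =
      {(a, b). 1 \<le> a \<and> a < b \<and> b \<le> n} \<union> (\<lambda>a. (a, Suc n)) ` {1..n}"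
    by auto
  have "finite {(a, b). 1 \<le> a \<and> a < b \<and> b \<le> n}"
    by (rule finite_subset[of _ "{1..n} \<times> {1..n}"]) auto
  moreover have "card ((\<lambda>a. (a, Suc n)) ` {1..n}) = n"
    by (subst card_image) (auto simp: inj_on_def)
  ultimately have "card {(a, b). 1 \<le> a \<and> a < b \<and> b \<le> Suc n} = (n choose 2) + n"
    unfolding split using Suc.IH by (subst card_Un_disjoint) auto
  then show ?case
    by (simp add: numeral_2_eq_2)
qed

definition inversions :: "nat \<Rightarrow> (nat \<Rightarrow> nat) \<Rightarrow> (nat \<times> nat) set" where
  "inversions n s = {(a, b). 1 \<le> a \<and> a < b \<and> b \<le> n \<and> s b < s a}"

lemma finite_inversions [simp]: "finite (inversions n s)"
  by (rule finite_subset[of _ "{1..n} \<times> {1..n}"]) (auto simp: inversions_def)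

lemma adj_swap_maps_inversions:
  assumes "1 \<le> q" "q < n" and "x \<in> inversions n s - {(q, q + 1)}"
  shows "map_prod (adj_swap q) (adj_swap q) x \<in> inversions n (s \<circ> adj_swap q) - {(q, q + 1)}"
proof -
  obtain a b where x: "x = (a, b)" and ab: "1 \<le> a" "a < b" "b \<le> n" "s b < s a"
    "(a, b) \<noteq> (q, q + 1)"
    using assms(3) by (auto simp: inversions_def)
  have "adj_swap q a < adj_swap q b"
    using adj_swap_less_adj_swap ab by blast
  moreover have "adj_swap q a \<in> {1..n}" "adj_swap q b \<in> {1..n}"
    using adj_swap_in_interval assms(1,2) ab by auto
  moreover have "(adj_swap q a, adj_swap q b) \<noteq> (q, q + 1)"
    using ab by (auto simp: adj_swap_def split: if_splits)
  ultimately show ?thesis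
    using x ab by (auto simp: inversions_def)
qed

lemma card_inversions_comp_adj_swap_Diff:
  assumes "1 \<le> q" "q < n"
  shows "card (inversions n (s \<circ> adj_swap q) - {(q, q + 1)}) = card (inversions n s - {(q, q + 1)})"
proof -
  have le: "card (inversions n t - {(q, q + 1)})
      \<le> card (inversions n (t \<circ> adj_swap q) - {(q, q + 1)})" for t
  proof (rule card_inj_on_le)
    have inj: "inj (adj_swap q)"
      by (rule injI) (metis adj_swap_adj_swap)
    show "inj_on (map_prod (adj_swap q) (adj_swap q)) (inversions n t - {(q, q + 1)})"
      by (rule inj_on_subset[OF prod.inj_map[OF inj inj]]) (rule subset_UNIV)
    show "map_prod (adj_swap q) (adj_swap q) ` (inversions n t - {(q, q + 1)})
        \<subseteq> inversions n (t \<circ> adj_swap q) - {(q, q + 1)}"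
      by (rule image_subsetI) (rule adj_swap_maps_inversions[OF assms])
  qed simp
  have involution: "s \<circ> adj_swap q \<circ> adj_swap q = s"
    by (simp add: fun_eq_iff)
  show ?thesis
    using le[of s] le[of "s \<circ> adj_swap q"] unfolding involution by linarith
qed

lemma card_inversions_comp_adj_swap_le:
  assumes "1 \<le> q" "q < n"
  shows "card (inversions n (s \<circ> adj_swap q)) \<le> Suc (card (inversions n s))"
proof -
  have "card (inversions n (s \<circ> adj_swap q))
      \<le> Suc (card (inversions n (s \<circ> adj_swap q) - {(q, q + 1)}))"
    by (cases "(q, q + 1) \<in> inversions n (s \<circ> adj_swap q)") (auto simp: card_Suc_Diff1)
  also have "\<dots> \<le> Suc (card (inversions n s))"
    using card_inversions_comp_adj_swap_Diff[OF assms, of s]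
      card_Diff1_le[of "inversions n s" "(q, q + 1)"] by simp
  finally show ?thesis .
qed

lemma card_inversions_comp_adj_swap_descent:
  assumes "1 \<le> q" "q < n" and "s (q + 1) < s q"
  shows "card (inversions n (s \<circ> adj_swap q)) < card (inversions n s)"
proof -
  have "(q, q + 1) \<in> inversions n s" "(q, q + 1) \<notin> inversions n (s \<circ> adj_swap q)"
    using assms by (auto simp: inversions_def adj_swap_def)
  moreover from this have "card (inversions n s) > 0"
    by (auto simp: card_gt_0_iff)
  ultimately show ?thesis
    using card_inversions_comp_adj_swap_Diff[OF assms(1,2), of s] by simp
qed

lemma card_inversions_sigma_le:
  assumes "set w \<subseteq> {1..<n}" and "m \<le> m'" "m' \<le> length w"
  shows "card (inversions n (sigma w m')) \<le> card (inversions n (sigma w m)) + (m' - m)"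
  using assms(2,3)
proof (induction m' rule: dec_induct)
  case base
  then show ?case by simp
next
  case (step k)
  have "w ! k \<in> {1..<n}"
    using assms(1) nth_mem[of k w] step.prems by (simp add: subset_iff)
  then have "card (inversions n (sigma w k \<circ> adj_swap (w ! k))) \<le> Suc (card (inversions n (sigma w k)))"
    by (intro card_inversions_comp_adj_swap_le) auto
  then have "card (inversions n (sigma w (Suc k))) \<le> Suc (card (inversions n (sigma w k)))"
    by (simp only: sigma.simps)
  moreover have "card (inversions n (sigma w k)) \<le> card (inversions n (sigma w m)) + (k - m)"
    using step by simp
  ultimately show ?case
    using \<open>m \<le> k\<close> by linarith
qed

lemma card_inversions_sigma_le_length:
  assumes "set w \<subseteq> {1..<n}" and "m \<le> length w"
  shows "card (inversions n (sigma w m)) \<le> m"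
proof -
  have "inversions n (sigma w 0) = {}"
    by (simp add: inversions_def)
  then show ?thesis
    using card_inversions_sigma_le[OF assms(1), of 0 m] assms(2) by simp
qed

definition precedes :: "nat \<Rightarrow> (nat \<Rightarrow> nat) \<Rightarrow> nat \<Rightarrow> nat \<Rightarrow> bool" where
  "precedes n s u v \<longleftrightarrow> (\<exists>a b. 1 \<le> a \<and> a < b \<and> b \<le> n \<and> s a = u \<and> s b = v)"

lemma precedes_asym:
  assumes "inj_on s {1..n}" and "precedes n s u v"
  shows "\<not> precedes n s v u"
proof
  assume "precedes n s v u"
  then obtain a' b' where a'b': "1 \<le> a'" "a' < b'" "b' \<le> n" "s a' = v" "s b' = u"
    unfolding precedes_def by blast
  obtain a b where ab: "1 \<le> a" "a < b" "b \<le> n" "s a = u" "s b = v"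
    using assms(2) unfolding precedes_def by blast
  have "a = b'"
    using inj_onD[OF assms(1), of a b'] ab a'b' by simp
  moreover have "b = a'"
    using inj_onD[OF assms(1), of b a'] ab a'b' by simp
  ultimately show False
    using ab(2) a'b'(2) by simp
qed

lemma precedes_total:
  assumes "bij_betw s {1..n} {1..n}" and "u \<noteq> v" "u \<in> {1..n}" "v \<in> {1..n}"
  shows "precedes n s u v \<or> precedes n s v u"
proof -
  have "s ` {1..n} = {1..n}"
    using assms(1) by (simp add: bij_betw_def)
  then obtain a b where a: "a \<in> {1..n}" "s a = u" and b: "b \<in> {1..n}" "s b = v"
    using assms(3,4) by (metis imageE)
  then have "a \<noteq> b"
    using assms(2) by blast
  then consider "a < b" | "b < a"
    by linarith
  then show ?thesis
  proof cases
    case 1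
    then show ?thesis
      unfolding precedes_def using a b by auto
  next
    case 2
    then show ?thesis
      unfolding precedes_def using a b by auto
  qed
qed

lemma precedes_comp_adj_swap:
  assumes "1 \<le> q" "q < n" and "precedes n s u v" and "\<not> (s q = u \<and> s (q + 1) = v)"
  shows "precedes n (s \<circ> adj_swap q) u v"
proof -
  obtain a b where ab: "1 \<le> a" "a < b" "b \<le> n" "s a = u" "s b = v"
    using assms(3) unfolding precedes_def by blast
  have "(a, b) \<noteq> (q, q + 1)"
    using ab assms(4) by auto
  then have "adj_swap q a < adj_swap q b"
    using adj_swap_less_adj_swap ab(2) by blast
  moreover have "adj_swap q a \<in> {1..n}" "adj_swap q b \<in> {1..n}"
    using adj_swap_in_interval[OF assms(1,2)] ab(1-3) by auto
  moreover have "(s \<circ> adj_swap q) (adj_swap q a) = u" "(s \<circ> adj_swap q) (adj_swap q b) = v"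
    using ab(4,5) by auto
  ultimately show ?thesis
    unfolding precedes_def by (metis atLeastAtMost_iff)
qed

context
  fixes n :: nat and w :: "nat list"
  assumes network: "avoiding_132_network n w"
begin

lemma letters_network: "set w \<subseteq> {1..<n}"
proof -
  have "\<forall>a \<in> set w. 1 \<le> a \<and> a \<le> n - 1"
    using network unfolding avoiding_132_network_def sorting_network_def by blast
  then show ?thesis
    by auto
qed

lemma letter_network: "m < length w \<Longrightarrow> 1 \<le> w ! m \<and> w ! m < n"
  using letters_network nth_mem[of m w] by (simp add: subset_iff)

lemma bij_betw_sigma_network: "m \<le> length w \<Longrightarrow> bij_betw (sigma w m) {1..n} {1..n}"
  using bij_betw_sigma[OF letters_network] .

lemma inj_on_sigma_network: "m \<le> length w \<Longrightarrow> inj_on (sigma w m) {1..n}"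
  by (rule bij_betw_imp_inj_on[OF bij_betw_sigma_network])

lemma sigma_in_interval: "m \<le> length w \<Longrightarrow> a \<in> {1..n} \<Longrightarrow> sigma w m a \<in> {1..n}"
  by (rule bij_betw_apply[OF bij_betw_sigma_network])

lemma sigma_surj:
  assumes "m \<le> length w" "y \<in> {1..n}"
  obtains a where "a \<in> {1..n}" "sigma w m a = y"
proof -
  have "y \<in> sigma w m ` {1..n}"
    using bij_betw_sigma_network[OF assms(1)] assms(2) by (simp add: bij_betw_def)
  then show ?thesis
    using that by blast
qed

lemma avoids_132_sigma: "m \<le> length w \<Longrightarrow> avoids_132 n (sigma w m)"
  using network by (simp add: avoiding_132_network_def)

lemma card_inversions_final: "card (inversions n (sigma w (length w))) = length w"
proof -
  have "inversions n (sigma w (length w)) = {(a, b). 1 \<le> a \<and> a < b \<and> b \<le> n}"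
    using network by (auto simp: inversions_def avoiding_132_network_def sorting_network_def)
  then show ?thesis
    using network card_increasing_pairs
    by (simp add: avoiding_132_network_def sorting_network_def)
qed

text \<open>The network reaches its \<open>length w\<close> inversions in \<open>length w\<close> steps, so no step may undo one.\<close>
lemma sigma_ascent:
  assumes m: "m < length w"
  shows "sigma w m (w ! m) < sigma w m (w ! m + 1)"
proof (rule ccontr)
  assume "\<not> ?thesis"
  moreover have "sigma w m (w ! m) \<noteq> sigma w m (w ! m + 1)"
    using inj_on_contraD[OF inj_on_sigma_network, of m "w ! m" "w ! m + 1"] letter_network[OF m] m
    by simp
  ultimately have "card (inversions n (sigma w m \<circ> adj_swap (w ! m)))
      < card (inversions n (sigma w m))"
    using letter_network[OF m] by (intro card_inversions_comp_adj_swap_descent) auto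
  then have "card (inversions n (sigma w (Suc m))) < card (inversions n (sigma w m))"
    by (simp only: sigma.simps)
  moreover have "card (inversions n (sigma w m)) \<le> m"
    using card_inversions_sigma_le_length[OF letters_network] m by simp
  moreover have "card (inversions n (sigma w (length w)))
      \<le> card (inversions n (sigma w (Suc m))) + (length w - Suc m)"
    using card_inversions_sigma_le[OF letters_network, of "Suc m" "length w"] m by simp
  ultimately show False
    using card_inversions_final m by simp
qed

lemma inversion_persists:
  assumes "u < v" and "precedes n (sigma w m) v u" and "m \<le> m'" "m' \<le> length w"
  shows "precedes n (sigma w m') v u"
  using assms(3,4)
proof (induction m' rule: dec_induct)
  case base
  then show ?case using assms(2) by simp
next
  case (step k)
  then have k: "k < length w"
    by simp
  then have "\<not> (sigma w k (w ! k) = v \<and> sigma w k (w ! k + 1) = u)"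
    using sigma_ascent[OF k] assms(1) by auto
  then have "precedes n (sigma w k \<circ> adj_swap (w ! k)) v u"
    using letter_network[OF k] step by (intro precedes_comp_adj_swap) auto
  then show ?case
    by (simp only: sigma.simps)
qed

lemma exists_swap_step:
  assumes "u < v" "u \<in> {1..n}" "v \<in> {1..n}"
    and "m \<le> length w" and "precedes n (sigma w m) v u"
  shows "\<exists>t < m. sigma w t (w ! t) = u \<and> sigma w t (w ! t + 1) = v"
  using assms(4,5)
proof (induction m)
  case 0
  then show ?case
    using assms(1) by (auto simp: precedes_def)
next
  case (Suc m)
  then have m: "m < length w"
    by simp
  show ?case
  proof (cases "precedes n (sigma w m) v u")
    case True
    then obtain t where "t < m" "sigma w t (w ! t) = u \<and> sigma w t (w ! t + 1) = v"
      using Suc.IH m by auto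
    then show ?thesis
      using less_SucI by blast
  next
    case False
    have "\<not> precedes n (sigma w (Suc m)) u v"
      by (rule precedes_asym[OF inj_on_sigma_network Suc.prems(2)]) (rule Suc.prems(1))
    then have "\<not> precedes n (sigma w m \<circ> adj_swap (w ! m)) u v"
      unfolding sigma.simps .
    moreover have "precedes n (sigma w m) u v"
      using precedes_total[OF bij_betw_sigma_network, of m u v] False assms(1-3) m by auto
    ultimately have "sigma w m (w ! m) = u \<and> sigma w m (w ! m + 1) = v"
      using precedes_comp_adj_swap letter_network[OF m] by blast
    then show ?thesis
      by blast
  qed
qed

lemma sigma_left_of_swap_gt:
  assumes m: "m < length w" and a: "1 \<le> a" "a < w ! m"
  shows "sigma w m (w ! m) < sigma w m a"
proof (rule ccontr)
  define q where "q = w ! m"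
  have q: "1 \<le> q" "q < n"
    using letter_network[OF m] q_def by auto
  assume "\<not> ?thesis"
  moreover have "sigma w m a \<noteq> sigma w m q"
    using inj_on_contraD[OF inj_on_sigma_network, of m a q] m a q q_def by simp
  ultimately have "sigma w m a < sigma w m q"
    using q_def by simp
  moreover have "sigma w m q < sigma w m (q + 1)"
    using sigma_ascent[OF m] q_def by simp
  moreover have "sigma w (Suc m) a = sigma w m a" "sigma w (Suc m) q = sigma w m (q + 1)"
    "sigma w (Suc m) (q + 1) = sigma w m q"
    using a q_def by (auto simp: adj_swap_def)
  ultimately have "\<not> avoids_132 n (sigma w (Suc m))"
    unfolding avoids_132_def not_not using a q q_def
    by (intro exI[of _ a] exI[of _ q] exI[of _ "q + 1"]) simp
  then show False
    using avoids_132_sigma[of "Suc m"] m by simp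
qed

lemma left_of_swap_if_between:
  assumes m: "m < length w" and c: "1 \<le> c" "c \<le> n"
    and between: "sigma w m (w ! m) < sigma w m c" "sigma w m c < sigma w m (w ! m + 1)"
  shows "c < w ! m"
proof (rule ccontr)
  assume "\<not> ?thesis"
  moreover have "c \<noteq> w ! m" "c \<noteq> w ! m + 1"
    using between by auto
  ultimately have "w ! m + 1 < c"
    by linarith
  then have "\<not> avoids_132 n (sigma w m)"
    unfolding avoids_132_def not_not using between letter_network[OF m] c
    by (intro exI[of _ "w ! m"] exI[of _ "w ! m + 1"] exI[of _ c]) simp
  then show False
    using avoids_132_sigma[of m] m by simp
qed

lemma swap_value_precedes_smaller:
  assumes t: "t < length w" and i: "i \<in> {1..n}" "i < sigma w t (w ! t)"
  shows "precedes n (sigma w t) (sigma w t (w ! t)) i"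
proof -
  obtain c where c: "c \<in> {1..n}" "sigma w t c = i"
    using sigma_surj[OF _ i(1), of t] t by auto
  have "\<not> c < w ! t"
    using sigma_left_of_swap_gt[OF t, of c] c i(2) by auto
  moreover have "c \<noteq> w ! t" "c \<noteq> w ! t + 1"
    using c i(2) sigma_ascent[OF t] by auto
  ultimately show ?thesis
    unfolding precedes_def using c letter_network[OF t]
    by (intro exI[of _ "w ! t"] exI[of _ c]) auto
qed

lemma sigma_left_of_swap_lt:
  assumes m: "m < length w" and a: "1 \<le> a" "a < w ! m"
  shows "sigma w m a < sigma w m (w ! m + 1)"
proof (rule ccontr)
  define q i j x where "q = w ! m" and "i = sigma w m q" and "j = sigma w m (q + 1)"
    and "x = sigma w m a"
  have q: "1 \<le> q" "q < n" and aq: "a < q"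
    using letter_network[OF m] a q_def by auto
  have inj: "inj_on (sigma w m) {1..n}"
    using inj_on_sigma_network m by simp
  have "i < j"
    using sigma_ascent[OF m] q_def i_def j_def by simp
  assume "\<not> ?thesis"
  moreover have "x \<noteq> j"
    using inj_on_contraD[OF inj, of a "q + 1"] a(1) aq q unfolding x_def j_def by simp
  ultimately have "j < x"
    using x_def j_def q_def by simp
  have range: "i \<in> {1..n}" "j \<in> {1..n}" "x \<in> {1..n}"
    using sigma_in_interval m a(1) aq q unfolding i_def j_def x_def by auto
  have "precedes n (sigma w m) x j"
    unfolding precedes_def x_def j_def using a(1) aq q by (intro exI[of _ a] exI[of _ "q + 1"]) auto
  then obtain t where t: "t < m" and swap: "sigma w t (w ! t) = j"
    using exists_swap_step[of j x m] \<open>j < x\<close> range m by auto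
  then have "precedes n (sigma w t) j i"
    using swap_value_precedes_smaller[of t i] \<open>i < j\<close> range m by simp
  then have "precedes n (sigma w m) j i"
    using inversion_persists \<open>i < j\<close> t m by simp
  moreover have "precedes n (sigma w m) i j"
    unfolding precedes_def i_def j_def using q by (intro exI[of _ q] exI[of _ "q + 1"]) auto
  ultimately show False
    using precedes_asym inj by blast
qed

lemma image_sigma_left_of_swap:
  assumes m: "m < length w"
  shows "sigma w m ` {1..<w ! m} = {sigma w m (w ! m)<..<sigma w m (w ! m + 1)}"
proof
  show "sigma w m ` {1..<w ! m} \<subseteq> {sigma w m (w ! m)<..<sigma w m (w ! m + 1)}"
    using sigma_left_of_swap_gt[OF m] sigma_left_of_swap_lt[OF m] by auto
next
  show "{sigma w m (w ! m)<..<sigma w m (w ! m + 1)} \<subseteq> sigma w m ` {1..<w ! m}"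
  proof
    fix y assume y: "y \<in> {sigma w m (w ! m)<..<sigma w m (w ! m + 1)}"
    have "sigma w m (w ! m + 1) \<le> n"
      using sigma_in_interval m letter_network[OF m] by simp
    then obtain c where c: "c \<in> {1..n}" "sigma w m c = y"
      using sigma_surj[of m y] m y by auto
    then have "c < w ! m"
      using left_of_swap_if_between[OF m] y by auto
    then show "y \<in> sigma w m ` {1..<w ! m}"
      using c by force
  qed
qed

end

theorem mainTheorem7:
  fixes n i j :: nat and w :: "nat list"
  assumes "avoiding_132_network n w"
    and "1 \<le> i" and "i < j" and "j \<le> n"
    and "1 \<le> k" and "k \<le> length w"
    and "{sigma w (k - 1) (w ! (k - 1)), sigma w (k - 1) (w ! (k - 1) + 1)} = {i, j}"
  shows "w ! (k - 1) = j - i"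
proof -
  define m q where "m = k - 1" and "q = w ! (k - 1)"
  have m: "m < length w"
    using assms(5,6) m_def by simp
  have q: "1 \<le> q" "q < n"
    using letter_network[OF assms(1) m] m_def q_def by auto
  have "sigma w m q = i" "sigma w m (q + 1) = j"
    using assms(3,7) sigma_ascent[OF assms(1) m] unfolding m_def q_def
    by (auto simp: doubleton_eq_iff)
  then have "sigma w m ` {1..<q} = {i<..<j}"
    using image_sigma_left_of_swap[OF assms(1) m] m_def q_def by simp
  moreover have "inj_on (sigma w m) {1..<q}"
    by (rule inj_on_subset[OF inj_on_sigma_network[OF assms(1)]]) (use m q in auto)
  ultimately have "card {1..<q} = card {i<..<j}"
    using card_image by metis
  then show ?thesis
    using q assms(3) q_def by simp
qed

end
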